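(* Let $\mathcal{C}$ be either $\mathbf{Sets}$ or $\mathbf{Vec}$ and let $M,N:\mathbf{R}^d\to\mathcal{C}$ be surjective persistence modules. Then \[d_{\mathrm{I},2d}(\mathrm{rk}(M),\mathrm{rk}(N))\le d_{\mathrm{I},d}(\mathrm{dm}(M),\mathrm{dm}(N)).\]
   Context: $\mathbf{R}^d$ has the product order and $\vec\varepsilon=\varepsilon(1,\dots,1)$. A persistence module $M:\mathbf{R}^d\to\mathcal{C}$ consists of objects $M_\mathbf{a}$ (finite sets or finite-dimensional vector spaces) and morphisms $\varphi_M(\mathbf{a},\mathbf{b}):M_\mathbf{a}\to M_\mathbf{b}$ for $\mathbf{a}\le\mathbf{b}$, functorially; it is surjective if every $\varphi_M(\mathbf{a},\mathbf{b})$ is surjective. The dimension function $\mathrm{dm}(M):\mathbf{R}^d\to\mathbf{Z}_+$ sends $\mathbf{a}$ to the cardinality (for $\mathbf{Sets}$) or dimension (for $\mathbf{Vec}$) of $M_\mathbf{a}$. The rank invariant $\mathrm{rk}(M):\mathbf{R}^d\times\mathbf{R}^d\to\mathbf{Z}_+\cup\{\infty\}$ is $\mathrm{rk}(M)(\mathbf{a},\mathbf{b})=$ rank of $\varphi_M(\mathbf{a},\mathbf{b})$ (for $\mathbf{Sets}$, the cardinality of its image) if $\mathbf{a}\le\mathbf{b}$, and $\infty$ otherwise. For $F,G:\mathbf{R}^d\to\mathbf{Z}_+$, $d_{\mathrm{I},d}(F,G):=\inf\{\varepsilon\ge0:\forall\mathbf{a},\ F(\mathbf{a})\ge G(\mathbf{a}+\vec\varepsilon),\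 G(\mathbf{a})\ge F(\mathbf{a}+\vec\varepsilon)\}$. For $F,G:\mathbf{R}^d\times\mathbf{R}^d\to\mathbf{Z}_+\cup\{\infty\}$, $d_{\mathrm{I},2d}(F,G):=\inf\{\varepsilon\ge0:\forall(\mathbf{a},\mathbf{b}),\ F(\mathbf{a},\mathbf{b})\ge G(\mathbf{a}-\vec\varepsilon,\mathbf{b}+\vec\varepsilon),\ G(\mathbf{a},\mathbf{b})\ge F(\mathbf{a}-\vec\varepsilon,\mathbf{b}+\vec\varepsilon)\}$. *)

theory Defs
  imports Complex_Main "HOL-Library.Extended_Real" "HOL-Library.Extended_Nat"
begin

text \<open>Points of R^d are functions 'n \<Rightarrow> real for a finite index type 'n (d = CARD('n));
  the order on them is the pointwise (product) order of HOL.\<close>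

definition shift :: "('n \<Rightarrow> real) \<Rightarrow> real \<Rightarrow> ('n \<Rightarrow> real)" where
  "shift a e = (\<lambda>i. a i + e)"

text \<open>Interleaving distance of functions R^d \<rightarrow> Z_+ (infimum in the extended reals,
  so the infimum of the empty set is +\<infinity>).\<close>
definition dI_d :: "(('n::finite \<Rightarrow> real) \<Rightarrow> nat) \<Rightarrow> (('n \<Rightarrow> real) \<Rightarrow> nat) \<Rightarrow> ereal" where
  "dI_d F G = Inf (ereal ` {e. e \<ge> 0 \<and>
      (\<forall>a. F a \<ge> G (shift a e) \<and> G a \<ge> F (shift a e))})"

definition dI_2d :: "(('n::finite \<Rightarrow> real) \<Rightarrow> ('n \<Rightarrow> real) \<Rightarrow> enat)
    \<Rightarrow> (('n \<Rightarrow> real) \<Rightarrow> ('n \<Rightarrow> real) \<Rightarrow> enat) \<Rightarrow> ereal" where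
  "dI_2d F G = Inf (ereal ` {e. e \<ge> 0 \<and>
      (\<forall>a b. F a b \<ge> G (shift a (-e)) (shift b e) \<and> G a b \<ge> F (shift a (-e)) (shift b e))})"

text \<open>Objects: finite sets S a (inside an ambient type); morphisms: f a b restricted to S a.\<close>
definition sets_pmod :: "(('n::finite \<Rightarrow> real) \<Rightarrow> 'x set) \<Rightarrow> (('n \<Rightarrow> real) \<Rightarrow> ('n \<Rightarrow> real) \<Rightarrow> 'x \<Rightarrow> 'x) \<Rightarrow> bool" where
  "sets_pmod S f \<longleftrightarrow>
     (\<forall>a. finite (S a)) \<and>
     (\<forall>a b. a \<le> b \<longrightarrow> f a b ` S a \<subseteq> S b) \<and>
     (\<forall>a. \<forall>x\<in>S a. f a a x = x) \<and>
     (\<forall>a b c. a \<le> b \<longrightarrow> b \<le> c \<longrightarrow> (\<forall>x\<in>S a. f a c x = f b c (f a b x)))"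

definition sets_surjective :: "(('n::finite \<Rightarrow> real) \<Rightarrow> 'x set) \<Rightarrow> (('n \<Rightarrow> real) \<Rightarrow> ('n \<Rightarrow> real) \<Rightarrow> 'x \<Rightarrow> 'x) \<Rightarrow> bool" where
  "sets_surjective S f \<longleftrightarrow> (\<forall>a b. a \<le> b \<longrightarrow> f a b ` S a = S b)"

definition sets_dm :: "(('n::finite \<Rightarrow> real) \<Rightarrow> 'x set) \<Rightarrow> ('n \<Rightarrow> real) \<Rightarrow> nat" where
  "sets_dm S a = card (S a)"

definition sets_rk :: "(('n::finite \<Rightarrow> real) \<Rightarrow> 'x set) \<Rightarrow> (('n \<Rightarrow> real) \<Rightarrow> ('n \<Rightarrow> real) \<Rightarrow> 'x \<Rightarrow> 'x)
    \<Rightarrow> ('n \<Rightarrow> real) \<Rightarrow> ('n \<Rightarrow> real) \<Rightarrow> enat" where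
  "sets_rk S f a b = (if a \<le> b then enat (card (f a b ` S a)) else \<infinity>)"

text \<open>Objects: finite-dimensional subspaces V a of an ambient vector space (over the field 'k,
  scalar multiplication scale); morphisms: f a b restricted to V a, linear.\<close>
definition vec_pmod :: "('k::field \<Rightarrow> 'v::ab_group_add \<Rightarrow> 'v) \<Rightarrow> (('n::finite \<Rightarrow> real) \<Rightarrow> 'v set)
    \<Rightarrow> (('n \<Rightarrow> real) \<Rightarrow> ('n \<Rightarrow> real) \<Rightarrow> 'v \<Rightarrow> 'v) \<Rightarrow> bool" where
  "vec_pmod scale V f \<longleftrightarrow>
     vector_space scale \<and>
     (\<forall>a. module.subspace scale (V a) \<and>
          (\<exists>B. finite B \<and> B \<subseteq> V a \<and> module.span scale B = V a)) \<and>
     (\<forall>a b. a \<le> b \<longrightarrow> f a b ` V a \<subseteq> V b \<and>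
          (\<forall>x\<in>V a. \<forall>y\<in>V a. f a b (x + y) = f a b x + f a b y) \<and>
          (\<forall>c. \<forall>x\<in>V a. f a b (scale c x) = scale c (f a b x))) \<and>
     (\<forall>a. \<forall>x\<in>V a. f a a x = x) \<and>
     (\<forall>a b c. a \<le> b \<longrightarrow> b \<le> c \<longrightarrow> (\<forall>x\<in>V a. f a c x = f b c (f a b x)))"

definition vec_surjective :: "(('n::finite \<Rightarrow> real) \<Rightarrow> 'v set) \<Rightarrow> (('n \<Rightarrow> real) \<Rightarrow> ('n \<Rightarrow> real) \<Rightarrow> 'v \<Rightarrow> 'v) \<Rightarrow> bool" where
  "vec_surjective V f \<longleftrightarrow> (\<forall>a b. a \<le> b \<longrightarrow> f a b ` V a = V b)"

definition vec_dm :: "('k::field \<Rightarrow> 'v::ab_group_add \<Rightarrow> 'v) \<Rightarrow> (('n::finite \<Rightarrow> real) \<Rightarrow> 'v set) \<Rightarrow> ('n \<Rightarrow> real) \<Rightarrow> nat" where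
  "vec_dm scale V a = vector_space.dim scale (V a)"

definition vec_rk :: "('k::field \<Rightarrow> 'v::ab_group_add \<Rightarrow> 'v) \<Rightarrow> (('n::finite \<Rightarrow> real) \<Rightarrow> 'v set)
    \<Rightarrow> (('n \<Rightarrow> real) \<Rightarrow> ('n \<Rightarrow> real) \<Rightarrow> 'v \<Rightarrow> 'v) \<Rightarrow> ('n \<Rightarrow> real) \<Rightarrow> ('n \<Rightarrow> real) \<Rightarrow> enat" where
  "vec_rk scale V f a b = (if a \<le> b then enat (vector_space.dim scale (f a b ` V a)) else \<infinity>)"

end

theory Submission
  imports Defs
begin

text \<open>For a surjective module the image of \<open>\<phi>(a, b)\<close> is all of the object at \<open>b\<close>, so
  \<open>rk(a, b) = dm(b)\<close> for \<open>a \<le> b\<close>: the rank invariant is determined by the dimension function.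
  An \<open>\<epsilon>\<close>-interleaving of the dimension functions then gives
  \<open>rk M(a, b) = dm M(b) \<ge> dm N(b + \<epsilon>) = rk N(a - \<epsilon>, b + \<epsilon>)\<close>, because \<open>a - \<epsilon> \<le> b + \<epsilon>\<close>;
  hence every admissible \<open>\<epsilon>\<close> for \<open>d\<^sub>I\<^sub>,\<^sub>d\<close> is admissible for \<open>d\<^sub>I\<^sub>,\<^sub>2\<^sub>d\<close>.\<close>

definition rk_of_dm :: "(('n \<Rightarrow> real) \<Rightarrow> nat) \<Rightarrow> ('n \<Rightarrow> real) \<Rightarrow> ('n \<Rightarrow> real) \<Rightarrow> enat" where
  "rk_of_dm F a b = (if a \<le> b then enat (F b) else \<infinity>)"

lemma shift_le_shift:
  assumes "a \<le> b" and "e \<ge> 0"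
  shows "shift a (-e) \<le> shift b e"
  using assms by (simp add: shift_def le_fun_def) (smt (verit))

lemma sets_rk_eq_rk_of_dm:
  assumes "sets_surjective S f"
  shows "sets_rk S f = rk_of_dm (sets_dm S)"
  using assms by (auto simp: fun_eq_iff sets_rk_def rk_of_dm_def sets_dm_def sets_surjective_def)

lemma vec_rk_eq_rk_of_dm:
  assumes "vec_surjective V f"
  shows "vec_rk scale V f = rk_of_dm (vec_dm scale V)"
  using assms by (auto simp: fun_eq_iff vec_rk_def rk_of_dm_def vec_dm_def vec_surjective_def)

lemma dI_2d_rk_of_dm_le_dI_d:
  fixes F G :: "('n::finite \<Rightarrow> real) \<Rightarrow> nat"
  shows "dI_2d (rk_of_dm F) (rk_of_dm G) \<le> dI_d F G"
proof -
  have "e \<ge> 0 \<and> (\<forall>a b. rk_of_dm F a b \<ge> rk_of_dm G (shift a (-e)) (shift b e)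
                   \<and> rk_of_dm G a b \<ge> rk_of_dm F (shift a (-e)) (shift b e))"
    if e: "e \<ge> 0" "\<forall>a. F a \<ge> G (shift a e) \<and> G a \<ge> F (shift a e)" for e
    using e shift_le_shift[OF _ e(1)] by (auto simp: rk_of_dm_def)
  then show ?thesis
    unfolding dI_2d_def dI_d_def by (intro Inf_superset_mono image_mono) blast
qed

theorem proposition6p10:
  fixes SM :: "('n::finite \<Rightarrow> real) \<Rightarrow> 'x set" and fM :: "('n \<Rightarrow> real) \<Rightarrow> ('n \<Rightarrow> real) \<Rightarrow> 'x \<Rightarrow> 'x"
    and SN :: "('n \<Rightarrow> real) \<Rightarrow> 'y set" and fN :: "('n \<Rightarrow> real) \<Rightarrow> ('n \<Rightarrow> real) \<Rightarrow> 'y \<Rightarrow> 'y"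
    and scale1 :: "'k::field \<Rightarrow> 'v::ab_group_add \<Rightarrow> 'v" and VM :: "('n \<Rightarrow> real) \<Rightarrow> 'v set"
    and gM :: "('n \<Rightarrow> real) \<Rightarrow> ('n \<Rightarrow> real) \<Rightarrow> 'v \<Rightarrow> 'v"
    and scale2 :: "'k \<Rightarrow> 'w::ab_group_add \<Rightarrow> 'w" and VN :: "('n \<Rightarrow> real) \<Rightarrow> 'w set"
    and gN :: "('n \<Rightarrow> real) \<Rightarrow> ('n \<Rightarrow> real) \<Rightarrow> 'w \<Rightarrow> 'w"
  shows "(sets_pmod SM fM \<and> sets_surjective SM fM \<and> sets_pmod SN fN \<and> sets_surjective SN fN
            \<longrightarrow> dI_2d (sets_rk SM fM) (sets_rk SN fN) \<le> dI_d (sets_dm SM) (sets_dm SN))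
       \<and> (vec_pmod scale1 VM gM \<and> vec_surjective VM gM \<and> vec_pmod scale2 VN gN \<and> vec_surjective VN gN
            \<longrightarrow> dI_2d (vec_rk scale1 VM gM) (vec_rk scale2 VN gN) \<le> dI_d (vec_dm scale1 VM) (vec_dm scale2 VN))"
  using dI_2d_rk_of_dm_le_dI_d sets_rk_eq_rk_of_dm vec_rk_eq_rk_of_dm by metis

end
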